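(* Let $\alpha\in(0,1]$, $k\ge1$ an integer, and $\beta=1-(1-\alpha)^{1/k}$. Let $\mathcal{F}$ be a finite family of convex sets in $\mathbb{R}^d$ with $|\mathcal{F}|\ge k$, and let $b\in\mathbb{R}^d$. Assume that for at least an $\alpha$ fraction of the $k$-element subfamilies $\{K_1,\dots,K_k\}\subseteq\mathcal{F}$, the set $\bigcap_{i=1}^kK_i$ has a point in $B(b,1)$. Then there is $q\in\mathbb{R}^d$ such that at least $\beta|\mathcal{F}|$ elements of $\mathcal{F}$ intersect the ball $B(q,1/\sqrt k)$.
   Context: $B(p,\rho)$ is the closed Euclidean ball of centre $p$ and radius $\rho$. *)

theory Defs
  imports "HOL-Analysis.Analysis"
begin

end

theory Submission
  imports Defs "HOL-Combinatorics.Multiset_Permutations"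
begin

text \<open>Argue by contraposition with \<open>c = (1 - \<alpha>) powr (1 / k)\<close> and \<open>r = 1 / sqrt k\<close>: suppose
  every ball of radius \<open>r\<close> is missed by more than \<open>c * card F\<close> members of \<open>F\<close>. Build ordered
  chains \<open>K\<^sub>1, \<dots>, K\<^sub>k\<close> greedily, each \<open>K\<^sub>i\<^sub>+\<^sub>1\<close> avoiding the \<open>r\<close>-ball around the point
  \<open>x\<^sub>i\<close> of the closed intersection of \<open>K\<^sub>1, \<dots>, K\<^sub>i\<close> nearest to \<open>b\<close>. Since projection onto a
  closed convex set gives \<open>dist b y\<^sup>2 \<ge> dist b x\<^sub>i\<^sup>2 + dist x\<^sub>i y\<^sup>2\<close>, the squared distance from
  \<open>b\<close> grows by at least \<open>r\<^sup>2 = 1 / k\<close> per step, strictly at the last one, so every chain has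
  intersection disjoint from \<open>cball b 1\<close>. There are more than \<open>c ^ k * n! / (n - k)!\<close> chains
  and each \<open>k\<close>-subfamily arises from at most \<open>k!\<close> of them, so more than a fraction
  \<open>c ^ k = 1 - \<alpha>\<close> of the \<open>k\<close>-subfamilies are bad.\<close>

lemma closest_point_sq_dist_add_le:
  fixes a y :: "'a::euclidean_space"
  assumes "convex S" "closed S" "y \<in> S"
  shows "(dist a (closest_point S a))\<^sup>2 + (dist (closest_point S a) y)\<^sup>2 \<le> (dist a y)\<^sup>2"
proof -
  define x where "x = closest_point S a"
  have "inner (a - x) (y - x) \<le> 0"
    unfolding x_def by (rule closest_point_dot[OF assms])
  moreover have "a - y = (a - x) - (y - x)" by simp
  ultimately show ?thesis
    unfolding x_def[symmetric] dist_norm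
    by (simp add: power2_norm_eq_inner inner_diff_left inner_diff_right inner_commute norm_minus_commute)
qed

lemma dist_ge_if_closure_disjoint_cball:
  fixes c x :: "'a::euclidean_space"
  assumes "x \<in> closure K" "K \<inter> cball c r = {}"
  shows "r \<le> dist c x"
proof -
  have "closure K \<subseteq> closure (- cball c r)"
    using assms(2) by (intro closure_mono) auto
  then show ?thesis
    using assms(1) by (force simp: closure_complement)
qed

lemma card_filter_add_card_filter_not:
  "finite A \<Longrightarrow> card {x\<in>A. P x} + card {x\<in>A. \<not> P x} = card A"
  by (subst card_Un_disjoint[symmetric]) (auto intro: arg_cong[where f = card])

lemma power_powr_inverse:
  fixes x :: real
  assumes "0 \<le> x" "0 < n"
  shows "(x powr (1 / real n)) ^ n = x"
  using assms by (simp flip: root_powr_inverse)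

definition inter_closest_point :: "'a::euclidean_space set list \<Rightarrow> 'a \<Rightarrow> 'a" where
  "inter_closest_point L b = closest_point (closure (\<Inter>(set L))) b"

text \<open>Once the intersection of a chain is empty, it misses every ball, so any unused set may
  follow; this keeps the number of continuations large in that case as well.\<close>

definition chain_successors ::
    "'a::euclidean_space set set \<Rightarrow> 'a \<Rightarrow> real \<Rightarrow> 'a set list \<Rightarrow> 'a set set" where
  "chain_successors F b r L =
     (if \<Inter>(set L) = {} then F - set L
      else {K\<in>F. K \<inter> cball (inter_closest_point L b) r = {}})"

fun greedy_chains :: "'a::euclidean_space set set \<Rightarrow> 'a \<Rightarrow> real \<Rightarrow> nat \<Rightarrow> 'a set list set" where
  "greedy_chains F b r 0 = {[]}"
| "greedy_chains F b r (Suc j) =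
     (\<Union>L\<in>greedy_chains F b r j. (\<lambda>K. L @ [K]) ` chain_successors F b r L)"

lemma inter_closest_point_in_closure:
  "\<Inter>(set L) \<noteq> {} \<Longrightarrow> inter_closest_point L b \<in> closure (\<Inter>(set L))"
  unfolding inter_closest_point_def by (rule closest_point_in_set) auto

lemma chain_successors_subset: "chain_successors F b r L \<subseteq> F"
  unfolding chain_successors_def by auto

lemma chain_successors_disjoint:
  assumes "0 < r"
  shows "chain_successors F b r L \<inter> set L = {}"
proof -
  have "K \<inter> cball (inter_closest_point L b) r \<noteq> {}" if "K \<in> set L" "\<Inter>(set L) \<noteq> {}" for K
  proof
    assume "K \<inter> cball (inter_closest_point L b) r = {}"
    moreover have "inter_closest_point L b \<in> closure K"
      using inter_closest_point_in_closure[OF that(2)] closure_mono[of "\<Inter>(set L)" K] that(1)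
      by blast
    ultimately show False
      using dist_ge_if_closure_disjoint_cball assms by fastforce
  qed
  then show ?thesis
    unfolding chain_successors_def by auto
qed

lemma greedy_chains_lists:
  "L \<in> greedy_chains F b r j \<Longrightarrow> length L = j \<and> set L \<subseteq> F"
  by (induction j arbitrary: L) (use chain_successors_subset in fastforce)+

lemma greedy_chains_distinct:
  "0 < r \<Longrightarrow> L \<in> greedy_chains F b r j \<Longrightarrow> distinct L"
  by (induction j arbitrary: L) (use chain_successors_disjoint in fastforce)+

lemma finite_greedy_chains:
  assumes "finite F"
  shows "finite (greedy_chains F b r j)"
proof (rule finite_subset)
  show "greedy_chains F b r j \<subseteq> {L. set L \<subseteq> F \<and> length L = j}"
    using greedy_chains_lists by blast
qed (use finite_lists_length_eq[OF assms] in blast)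

lemma convex_closure_Inter_greedy_chain:
  assumes "L \<in> greedy_chains F b r j" "\<forall>K\<in>F. convex K"
  shows "convex (closure (\<Inter>(set L)))"
  using assms greedy_chains_lists[OF assms(1)] by (intro convex_closure convex_Inter) auto

lemma greedy_chains_sq_dist_inter_closest_point:
  fixes b :: "'a::euclidean_space"
  assumes "L \<in> greedy_chains F b r j" "\<forall>K\<in>F. convex K" "0 \<le> r" "\<Inter>(set L) \<noteq> {}"
  shows "real j * r\<^sup>2 \<le> (dist b (inter_closest_point L b))\<^sup>2"
  using assms(1,4)
proof (induction j arbitrary: L)
  case 0
  then show ?case by simp
next
  case (Suc j)
  then obtain T K where L: "L = T @ [K]" and T: "T \<in> greedy_chains F b r j"
    and K: "K \<in> chain_successors F b r T"
    by auto
  define x where "x = inter_closest_point T b"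
  define y where "y = inter_closest_point L b"
  have "\<Inter>(set T) \<noteq> {}"
    using Suc.prems(2) L by auto
  then have K_avoids: "K \<inter> cball x r = {}"
    using K unfolding chain_successors_def x_def by auto
  have "y \<in> closure (K \<inter> \<Inter>(set T))"
    using inter_closest_point_in_closure[OF Suc.prems(2)] L unfolding y_def by simp
  then have y_T: "y \<in> closure (\<Inter>(set T))" and y_K: "y \<in> closure K"
    using closure_mono[of "K \<inter> \<Inter>(set T)"] by blast+
  have "r\<^sup>2 \<le> (dist x y)\<^sup>2"
    using dist_ge_if_closure_disjoint_cball[OF y_K K_avoids] assms(3) by (simp add: power_mono)
  moreover have "(dist b x)\<^sup>2 + (dist x y)\<^sup>2 \<le> (dist b y)\<^sup>2"
    using closest_point_sq_dist_add_le[OF convex_closure_Inter_greedy_chain[OF T assms(2)] _ y_T]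
    unfolding x_def inter_closest_point_def by simp
  moreover have "real j * r\<^sup>2 \<le> (dist b x)\<^sup>2"
    using Suc.IH[OF T \<open>\<Inter>(set T) \<noteq> {}\<close>] unfolding x_def .
  ultimately show ?case
    unfolding y_def by (simp add: algebra_simps)
qed

lemma greedy_chains_inter_disjoint_cball:
  fixes b :: "'a::euclidean_space"
  assumes "L \<in> greedy_chains F b r (Suc j)" "\<forall>K\<in>F. convex K" "0 \<le> r"
  shows "\<Inter>(set L) \<inter> cball b (sqrt (Suc j) * r) = {}"
proof -
  obtain T K where L: "L = T @ [K]" and T: "T \<in> greedy_chains F b r j"
    and K: "K \<in> chain_successors F b r T"
    using assms(1) by auto
  have "sqrt (Suc j) * r < dist b y" if y_K: "y \<in> K" and y_T: "y \<in> \<Inter>(set T)" for y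
  proof -
    define x where "x = inter_closest_point T b"
    have T_nonempty: "\<Inter>(set T) \<noteq> {}"
      using y_T by blast
    then have "K \<inter> cball x r = {}"
      using K unfolding chain_successors_def x_def by simp
    then have "r < dist x y"
      using y_K by (meson disjoint_iff mem_cball not_le)
    then have "r\<^sup>2 < (dist x y)\<^sup>2"
      using assms(3) by (simp add: power_strict_mono)
    moreover have "(dist b x)\<^sup>2 + (dist x y)\<^sup>2 \<le> (dist b y)\<^sup>2"
      unfolding x_def inter_closest_point_def
      using convex_closure_Inter_greedy_chain[OF T assms(2)] subsetD[OF closure_subset y_T]
      by (intro closest_point_sq_dist_add_le) auto
    moreover have "real j * r\<^sup>2 \<le> (dist b x)\<^sup>2"
      unfolding x_def by (rule greedy_chains_sq_dist_inter_closest_point[OF T assms(2,3) T_nonempty])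
    moreover have "(sqrt (Suc j) * r)\<^sup>2 = real j * r\<^sup>2 + r\<^sup>2"
      by (simp add: power_mult_distrib distrib_right)
    ultimately have "(sqrt (Suc j) * r)\<^sup>2 < (dist b y)\<^sup>2"
      by linarith
    then show ?thesis
      by (rule power_less_imp_less_base) simp
  qed
  then show ?thesis
    unfolding L by (auto simp: not_le[symmetric])
qed

lemma card_greedy_chains_Suc:
  assumes "finite F"
  shows "card (greedy_chains F b r (Suc j)) = (\<Sum>L\<in>greedy_chains F b r j. card (chain_successors F b r L))"
proof -
  have "card (greedy_chains F b r (Suc j))
          = (\<Sum>L\<in>greedy_chains F b r j. card ((\<lambda>K. L @ [K]) ` chain_successors F b r L))"
    unfolding greedy_chains.simps
    using finite_greedy_chains[OF assms] finite_subset[OF chain_successors_subset assms]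
    by (intro card_UN_disjoint) auto
  also have "\<dots> = (\<Sum>L\<in>greedy_chains F b r j. card (chain_successors F b r L))"
    by (intro sum.cong refl card_image) (simp add: inj_on_def)
  finally show ?thesis .
qed

lemma card_chain_successors_gt:
  fixes c :: real
  assumes "finite F" "0 < r" "0 \<le> c" "c < 1"
    and sparse: "\<And>q. c * card F < card {K\<in>F. K \<inter> cball q r = {}}"
    and L: "L \<in> greedy_chains F b r j" and "j < card F"
  shows "c * (card F - j) < card (chain_successors F b r L)"
proof (cases "\<Inter>(set L) = {}")
  case True
  have "card (set L) = j"
    using greedy_chains_lists[OF L] greedy_chains_distinct[OF assms(2) L] distinct_card by metis
  then have "card (chain_successors F b r L) = card F - j"
    using True greedy_chains_lists[OF L] assms(1)
    by (simp add: chain_successors_def card_Diff_subset finite_subset)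
  then show ?thesis
    using assms(4,7) by simp
next
  case False
  have "c * (card F - j) \<le> c * card F"
    using assms(3) by (simp add: mult_left_mono)
  then show ?thesis
    using False sparse[of "inter_closest_point L b"] by (simp add: chain_successors_def)
qed

lemma fact_div_fact_diff_Suc:
  assumes "j < n"
  shows "fact n / fact (n - Suc j) = (fact n / fact (n - j) * (n - j) :: real)"
proof -
  have "n - j = Suc (n - Suc j)"
    using assms by simp
  then show ?thesis
    by (simp add: field_simps)
qed

lemma card_greedy_chains_gt:
  fixes c :: real
  assumes "finite F" "0 < r" "0 \<le> c" "c < 1"
    and sparse: "\<And>q. c * card F < card {K\<in>F. K \<inter> cball q r = {}}"
    and "0 < j" "j \<le> card F"
  shows "c ^ j * (fact (card F) / fact (card F - j)) < card (greedy_chains F b r j)"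
  using assms(6,7)
proof (induction j)
  case 0
  then show ?case by simp
next
  case (Suc j)
  let ?n = "card F" and ?C = "greedy_chains F b r"
  have lower: "c ^ j * (fact ?n / fact (?n - j)) \<le> card (?C j)"
    using Suc by (cases "j = 0") auto
  have "?C j \<noteq> {}"
  proof (cases "j = 0")
    case False
    have "0 \<le> c ^ j * (fact ?n / fact (?n - j))"
      using assms(3) by simp
    then show ?thesis
      using Suc False by fastforce
  qed simp
  have "c ^ Suc j * (fact ?n / fact (?n - Suc j)) = c * (?n - j) * (c ^ j * (fact ?n / fact (?n - j)))"
    using Suc.prems by (simp add: fact_div_fact_diff_Suc)
  also have "\<dots> \<le> c * (?n - j) * card (?C j)"
    using lower assms(3) Suc.prems by (intro mult_left_mono) auto
  also have "\<dots> = (\<Sum>L\<in>?C j. c * (?n - j))"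
    by simp
  also have "\<dots> < (\<Sum>L\<in>?C j. real (card (chain_successors F b r L)))"
    using card_chain_successors_gt[OF assms(1-5)] Suc.prems
    by (intro sum_strict_mono finite_greedy_chains assms(1) \<open>?C j \<noteq> {}\<close>) auto
  also have "\<dots> = card (?C (Suc j))"
    unfolding card_greedy_chains_Suc[OF assms(1)] by simp
  finally show ?case .
qed

lemma card_greedy_chains_le:
  fixes b :: "'a::euclidean_space"
  assumes "finite F" "0 < r" "\<forall>K\<in>F. convex K" "0 < j"
  shows "card (greedy_chains F b r j)
           \<le> card {S. S \<subseteq> F \<and> card S = j \<and> \<Inter>S \<inter> cball b (sqrt j * r) = {}} * fact j"
    (is "_ \<le> card ?Bad * _")
proof -
  have finite_Bad: "finite ?Bad"
    using assms(1) by (auto intro: finite_subset[of _ "Pow F"])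
  have "greedy_chains F b r j \<subseteq> (\<Union>S\<in>?Bad. permutations_of_set S)"
  proof
    fix L assume L: "L \<in> greedy_chains F b r j"
    have "distinct L" "length L = j" "set L \<subseteq> F"
      using greedy_chains_distinct[OF assms(2) L] greedy_chains_lists[OF L] by auto
    moreover have "\<Inter>(set L) \<inter> cball b (sqrt j * r) = {}"
      using greedy_chains_inter_disjoint_cball[of L F b r "j - 1"] L assms(2-4) by simp
    ultimately show "L \<in> (\<Union>S\<in>?Bad. permutations_of_set S)"
      by (auto simp: distinct_card permutations_of_set_def)
  qed
  then have "card (greedy_chains F b r j) \<le> card (\<Union>S\<in>?Bad. permutations_of_set S)"
    using finite_Bad by (intro card_mono) (auto simp: finite_permutations_of_set)
  also have "\<dots> \<le> (\<Sum>S\<in>?Bad. card (permutations_of_set S))"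
    by (rule card_UN_le[OF finite_Bad])
  also have "\<dots> = (\<Sum>S\<in>?Bad. fact j)"
    using assms(1) by (intro sum.cong refl) (auto simp: finite_subset)
  also have "\<dots> = card ?Bad * fact j"
    by simp
  finally show ?thesis .
qed

lemma card_subfamilies_missing_cball_gt:
  fixes c :: real and b :: "'a::euclidean_space"
  assumes "finite F" "0 < r" "0 \<le> c" "c < 1" "\<forall>K\<in>F. convex K"
    and sparse: "\<And>q. c * card F < card {K\<in>F. K \<inter> cball q r = {}}"
    and "0 < k" "k \<le> card F"
  shows "c ^ k * (card F choose k) < card {S. S \<subseteq> F \<and> card S = k \<and> \<Inter>S \<inter> cball b (sqrt k * r) = {}}"
    (is "_ < real (card ?Bad)")
proof -
  have "c ^ k * (card F choose k) * fact k = c ^ k * (fact k * real (card F choose k))"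
    by (simp add: mult_ac)
  also have "\<dots> = c ^ k * (fact (card F) / fact (card F - k))"
    by (simp only: fact_binomial[OF assms(8)])
  also have "\<dots> < card (greedy_chains F b r k)"
    using assms(7,8) by (intro card_greedy_chains_gt[OF assms(1-4) sparse])
  also have "\<dots> \<le> card ?Bad * fact k"
    using of_nat_mono[OF card_greedy_chains_le[OF assms(1,2,5,7)]] by simp
  finally show ?thesis
    by simp
qed

lemma n_subsets_partition:
  assumes "finite F"
  shows "card {S. S \<subseteq> F \<and> card S = k \<and> P S} + card {S. S \<subseteq> F \<and> card S = k \<and> \<not> P S} = card F choose k"
proof -
  have "finite {S. S \<subseteq> F \<and> card S = k}"
    using assms by (auto intro: finite_subset[of _ "Pow F"])
  from card_filter_add_card_filter_not[OF this, of P]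
  show ?thesis
    by (simp add: n_subsets[OF assms] conj_assoc)
qed

theorem theorem4p4:
  fixes \<alpha> \<beta> :: real and k :: nat and F :: "'a::euclidean_space set set" and b :: 'a
  assumes "0 < \<alpha>" "\<alpha> \<le> 1" "k \<ge> 1"
    and "\<beta> = 1 - (1 - \<alpha>) powr (1 / real k)"
    and "finite F" "card F \<ge> k" "\<forall>K\<in>F. convex K"
    and "real (card {S. S \<subseteq> F \<and> card S = k \<and> \<Inter>S \<inter> cball b 1 \<noteq> {}})
           \<ge> \<alpha> * real (card F choose k)"
  shows "\<exists>q. real (card {K\<in>F. K \<inter> cball q (1 / sqrt (real k)) \<noteq> {}}) \<ge> \<beta> * real (card F)"
proof (rule ccontr)
  assume few_meet: "\<not> ?thesis"
  define c where "c = (1 - \<alpha>) powr (1 / real k)"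
  define r where "r = 1 / sqrt (real k)"
  have c: "0 \<le> c" "c < 1" "c ^ k = 1 - \<alpha>"
    using assms(1-3) powr_less_mono2[of "1 / real k" "1 - \<alpha>" 1]
    unfolding c_def by (auto simp: power_powr_inverse)
  have r_pos: "0 < r" and unit_radius: "sqrt (real k) * r = 1"
    using assms(3) unfolding r_def by simp_all
  have sparse: "c * card F < card {K\<in>F. K \<inter> cball q r = {}}" for q
  proof -
    have "card {K\<in>F. K \<inter> cball q r \<noteq> {}} < (1 - c) * card F"
      using few_meet unfolding assms(4) c_def[symmetric] r_def by (simp add: not_le)
    moreover have "card {K\<in>F. K \<inter> cball q r = {}} + card {K\<in>F. K \<inter> cball q r \<noteq> {}} = card F"
      by (rule card_filter_add_card_filter_not[OF assms(5)])
    ultimately show ?thesis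
      by (simp add: algebra_simps flip: of_nat_add)
  qed
  have "(1 - \<alpha>) * (card F choose k) < card {S. S \<subseteq> F \<and> card S = k \<and> \<Inter>S \<inter> cball b 1 = {}}"
    using card_subfamilies_missing_cball_gt[OF assms(5) r_pos c(1,2) assms(7) sparse, of k b] assms(3,6)
    unfolding c(3) unit_radius by simp
  then show False
    using assms(8) n_subsets_partition[OF assms(5),
        of k "\<lambda>S. \<Inter>S \<inter> cball b 1 \<noteq> {}"]
    by (simp add: left_diff_distrib flip: of_nat_add)
qed

end
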